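(* Let $A$ be an abelian group and $(A_i)_{i\in I}$ a family of subgroups such that the lattice of subgroups generated by the $A_i$ (under $+$ and $\cap$) is distributive. Let $B$ be one of the $A_i$ and $n$ a positive integer. If $$H^n\big((B\cap A_i)_{i\in I},A\big)=0\quad\text{and}\quad H^n\Big(\big((B+A_i)/B\big)_{i\in I},A/B\Big)=0,$$ then $H^n\big((A_i)_{i\in I},A\big)=0$.
   Context: For an abelian group $M$ and a family $(M_i)_{i\in I}$ of subgroups, $H^n((M_i),M)$ denotes the $n$-th cohomology of the cochain complex $C^n=\prod_{i_0,\dots,i_n\in I}M/(M_{i_0}+\cdots+M_{i_n})$ with differential $(df)(i_0,\dots,i_n)=\sum_{j=0}^n(-1)^j f(i_0,\dots,\widehat{i_j},\dots,i_n)\bmod M_{i_0}+\cdots+M_{i_n}$. A lattice is distributive if one (equivalently, each) of its operations distributes over the other. *)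

theory Defs
  imports "HOL-Algebra.Algebra"
begin

(* Abelian groups are HOL-Algebra comm_groups (written multiplicatively).
   Sum of subgroups M_{i_0} + ... + M_{i_k}: the subgroup generated by their union. *)
definition sumsub :: "('a,'b) monoid_scheme \<Rightarrow> 'a set list \<Rightarrow> 'a set" where
  "sumsub G Ns = generate G (\<Union> (set Ns))"

definition del_at :: "nat \<Rightarrow> 'i list \<Rightarrow> 'i list" where
  "del_at j is = take j is @ drop (Suc j) is"

(* Cochains are represented by representatives f : I^{k+1} -> M; the value of the
   cochain at (i_0..i_k) is the class of f(i_0..i_k) in M/(M_{i_0}+...+M_{i_k}). *)
definition cdiff :: "('a,'b) monoid_scheme \<Rightarrow> ('i list \<Rightarrow> 'a) \<Rightarrow> 'i list \<Rightarrow> 'a" where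
  "cdiff G f is = finprod G (\<lambda>j. f (del_at j is) [^]\<^bsub>G\<^esub> ((-1::int) ^ j)) {..<length is}"

(* H^n((M_i)_{i}, M) = 0, for n >= 1: every n-cocycle is an n-coboundary.
   Here the ambient group M is carrier G, and the index set I is the type 'i. *)
definition cohom_vanishes :: "('a,'b) monoid_scheme \<Rightarrow> ('i \<Rightarrow> 'a set) \<Rightarrow> nat \<Rightarrow> bool" where
  "cohom_vanishes G M n \<longleftrightarrow>
    (\<forall>f. (\<forall>is. length is = n + 1 \<longrightarrow> f is \<in> carrier G)
       \<and> (\<forall>is. length is = n + 2 \<longrightarrow> cdiff G f is \<in> sumsub G (map M is))
     \<longrightarrow> (\<exists>g. (\<forall>is. length is = n \<longrightarrow> g is \<in> carrier G)
            \<and> (\<forall>is. length is = n + 1 \<longrightarrow>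
                  cdiff G g is \<otimes>\<^bsub>G\<^esub> inv\<^bsub>G\<^esub> (f is) \<in> sumsub G (map M is))))"

definition subgroup_lattice :: "('a,'b) monoid_scheme \<Rightarrow> ('i \<Rightarrow> 'a set) \<Rightarrow> 'a set set" where
  "subgroup_lattice G A = \<Inter> {Lat. range A \<subseteq> Lat \<and>
      (\<forall>U\<in>Lat. \<forall>V\<in>Lat. generate G (U \<union> V) \<in> Lat \<and> U \<inter> V \<in> Lat)}"

definition distributive_subgroup_lattice :: "('a,'b) monoid_scheme \<Rightarrow> ('i \<Rightarrow> 'a set) \<Rightarrow> bool" where
  "distributive_subgroup_lattice G A \<longleftrightarrow>
    (\<forall>U\<in>subgroup_lattice G A. \<forall>V\<in>subgroup_lattice G A. \<forall>W\<in>subgroup_lattice G A.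
       U \<inter> generate G (V \<union> W) = generate G ((U \<inter> V) \<union> (U \<inter> W)))"

end

theory Submission
  imports Defs
begin

(* Let f be an n-cocycle for (A_i) and B = A_b.  The image of f in A/B is a cocycle for the
   family ((B + A_i)/B), hence a coboundary; lifting a primitive to a cochain g, the values of
   f - dg lie in B + (A_i0 + ... + A_in).  Subtracting a cochain a with values in
   A_i0 + ... + A_in, which changes nothing modulo the A_i, leaves a cochain c = f - dg - a with
   values in B.  Then dc lies in B and in A_i0 + ... + A_i(n+1), so by distributivity in
   (B \<inter> A_i0) + ... + (B \<inter> A_i(n+1)): c is a cocycle for (B \<inter> A_i), hence a coboundary,
   and so is f = dg + c + a. *)

lemma length_del_at [simp]: "j < length is \<Longrightarrow> length (del_at j is) = length is - 1"
  by (simp add: del_at_def)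

lemma set_del_at_subset: "set (del_at j is) \<subseteq> set is"
  unfolding del_at_def by (metis Un_least set_append set_drop_subset set_take_subset)

lemma nth_del_at:
  "j < length is \<Longrightarrow> i < length is - 1 \<Longrightarrow> del_at j is ! i = (if i < j then is ! i else is ! Suc i)"
  by (auto simp: del_at_def nth_append min_def)

lemma del_at_del_at:
  "k < j \<Longrightarrow> j < length is \<Longrightarrow> del_at k (del_at j is) = del_at (j - 1) (del_at k is)"
  by (rule nth_equalityI) (auto simp: nth_del_at)

lemma hom_finprod:
  assumes "comm_group G" "comm_group H" "h \<in> hom G H" "f \<in> A \<rightarrow> carrier G"
  shows "h (finprod G f A) = finprod H (\<lambda>a. h (f a)) A"
proof -
  interpret G: comm_group G by fact
  interpret H: comm_group H by fact
  interpret group_hom G H h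
    using assms by (simp add: group_hom_def group_hom_axioms_def G.is_group H.is_group)
  show ?thesis
    using assms(4) by (induction A rule: infinite_finite_induct) (auto simp: Pi_def)
qed

context comm_group
begin

lemma finprod_int_pow:
  "f \<in> A \<rightarrow> carrier G \<Longrightarrow> finprod G f A [^] (e::int) = finprod G (\<lambda>a. f a [^] e) A"
  by (induction A rule: infinite_finite_induct) (auto simp: int_pow_distrib Pi_def)

lemma finprod_cartesian_product:
  assumes "finite J" "finite K" "x \<in> J \<times> K \<rightarrow> carrier G"
  shows "finprod G (\<lambda>j. finprod G (\<lambda>k. x (j, k)) K) J = finprod G x (J \<times> K)"
  using assms(1,3)
proof (induction J rule: finite_induct)
  case (insert j J)
  have rows: "(\<lambda>j'. finprod G (\<lambda>k. x (j', k)) K) \<in> insert j J \<rightarrow> carrier G"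
    using insert.prems by (auto simp: Pi_iff intro!: finprod_closed)
  have "insert j J \<times> K = Pair j ` K \<union> J \<times> K" by auto
  then have "finprod G x (insert j J \<times> K) = finprod G x (Pair j ` K) \<otimes> finprod G x (J \<times> K)"
    using insert assms(2) by (auto intro!: finprod_Un_disjoint)
  also have "finprod G x (Pair j ` K) = finprod G (\<lambda>k. x (j, k)) K"
    using insert by (subst finprod_reindex) (auto simp: inj_on_def)
  also have "finprod G x (J \<times> K) = finprod G (\<lambda>j. finprod G (\<lambda>k. x (j, k)) K) J"
    using insert by (auto simp: Pi_iff)
  finally show ?case
    using insert rows by (simp add: Pi_iff)
qed simp

lemma finprod_cancel_pairs:
  assumes "finite S" "inj_on \<phi> S" "S \<inter> \<phi> ` S = {}" "x \<in> S \<union> \<phi> ` S \<rightarrow> carrier G"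
    and "\<And>p. p \<in> S \<Longrightarrow> x p \<otimes> x (\<phi> p) = \<one>"
  shows "finprod G x (S \<union> \<phi> ` S) = \<one>"
proof -
  have "finprod G x (S \<union> \<phi> ` S) = finprod G x S \<otimes> finprod G (\<lambda>p. x (\<phi> p)) S"
    using assms(1-4) by (simp add: finprod_Un_disjoint finprod_reindex)
  also have "\<dots> = finprod G (\<lambda>p. x p \<otimes> x (\<phi> p)) S"
    using assms(4) by (simp add: Pi_def)
  also have "\<dots> = \<one>"
    using assms(5) by (simp add: finprod_one_eqI)
  finally show ?thesis .
qed

lemma subgroup_finprod_closed:
  assumes "subgroup S G" "f \<in> A \<rightarrow> S"
  shows "finprod G f A \<in> S"
  using assms(2)
proof (induction A rule: infinite_finite_induct)
  case (insert a A)
  then have "f \<in> insert a A \<rightarrow> carrier G"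
    using subgroup.subset[OF assms(1)] by blast
  then show ?case
    using insert subgroup.m_closed[OF assms(1)] by (simp add: Pi_def)
qed (simp_all add: subgroup.one_closed[OF assms(1)])

end

section \<open>Cochains\<close>

text \<open>The index m of cochain G m f counts the entries of the tuples, so an n-cochain
  is a cochain G (Suc n) f.\<close>
definition cochain :: "('a, 'b) monoid_scheme \<Rightarrow> nat \<Rightarrow> ('i list \<Rightarrow> 'a) \<Rightarrow> bool" where
  "cochain G m f \<longleftrightarrow> (\<forall>is. length is = m \<longrightarrow> f is \<in> carrier G)"

definition cocycle :: "('a, 'b) monoid_scheme \<Rightarrow> ('i \<Rightarrow> 'a set) \<Rightarrow> nat \<Rightarrow> ('i list \<Rightarrow> 'a) \<Rightarrow> bool" where
  "cocycle G M n f \<longleftrightarrow> cochain G (Suc n) f \<and>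
     (\<forall>is. length is = Suc (Suc n) \<longrightarrow> cdiff G f is \<in> sumsub G (map M is))"

definition coboundary :: "('a, 'b) monoid_scheme \<Rightarrow> ('i \<Rightarrow> 'a set) \<Rightarrow> nat \<Rightarrow> ('i list \<Rightarrow> 'a) \<Rightarrow> bool" where
  "coboundary G M n f \<longleftrightarrow> cochain G (Suc n) f \<and> (\<exists>g. cochain G n g \<and>
     (\<forall>is. length is = Suc n \<longrightarrow> cdiff G g is \<otimes>\<^bsub>G\<^esub> inv\<^bsub>G\<^esub> f is \<in> sumsub G (map M is)))"

lemma cohom_vanishes_iff: "cohom_vanishes G M n \<longleftrightarrow> (\<forall>f. cocycle G M n f \<longrightarrow> coboundary G M n f)"
  unfolding cohom_vanishes_def cocycle_def coboundary_def cochain_def by auto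

lemma cochainD: "cochain G m f \<Longrightarrow> length is = m \<Longrightarrow> f is \<in> carrier G"
  by (simp add: cochain_def)

context comm_group
begin

lemma cochain_mult: "cochain G m f \<Longrightarrow> cochain G m g \<Longrightarrow> cochain G m (\<lambda>is. f is \<otimes> g is)"
  by (simp add: cochain_def)

lemma cochain_inv: "cochain G m f \<Longrightarrow> cochain G m (\<lambda>is. inv f is)"
  by (simp add: cochain_def)

lemma cochain_cdiff: "cochain G m f \<Longrightarrow> cochain G (Suc m) (cdiff G f)"
  unfolding cochain_def cdiff_def by (auto intro!: finprod_closed)

lemma cdiff_mult:
  assumes "cochain G m f" "cochain G m g" "length is = Suc m"
  shows "cdiff G (\<lambda>js. f js \<otimes> g js) is = cdiff G f is \<otimes> cdiff G g is"
proof -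
  have carrier: "f (del_at j is) \<in> carrier G" "g (del_at j is) \<in> carrier G" if "j < length is" for j
    using assms that by (auto simp: cochain_def)
  have "cdiff G (\<lambda>js. f js \<otimes> g js) is = (\<Otimes>j\<in>{..<length is}.
      f (del_at j is) [^] ((-1::int) ^ j) \<otimes> g (del_at j is) [^] ((-1::int) ^ j))"
    unfolding cdiff_def using carrier by (intro finprod_cong') (auto simp: int_pow_distrib)
  then show ?thesis
    unfolding cdiff_def using carrier by simp
qed

lemma cdiff_cong:
  assumes "cochain G m g" "\<And>js. length js = m \<Longrightarrow> f js = g js" "length is = Suc m"
  shows "cdiff G f is = cdiff G g is"
  unfolding cdiff_def using assms by (intro finprod_cong') (auto simp: cochain_def)

lemma cdiff_inv:
  assumes "cochain G m f" "length is = Suc m"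
  shows "cdiff G (\<lambda>js. inv f js) is = inv cdiff G f is"
proof -
  have "cdiff G f is \<otimes> cdiff G (\<lambda>js. inv f js) is = cdiff G (\<lambda>js. f js \<otimes> inv f js) is"
    using assms by (simp add: cdiff_mult cochain_inv)
  also have "\<dots> = cdiff G (\<lambda>js. \<one>) is"
    using assms by (intro cdiff_cong[of m]) (auto simp: cochain_def)
  finally have "cdiff G f is \<otimes> cdiff G (\<lambda>js. inv f js) is = \<one>"
    by (simp add: cdiff_def)
  then show ?thesis
    using assms cochain_cdiff[OF cochain_inv] cochain_cdiff
    by (metis cochainD inv_equality m_comm)
qed

lemma cdiff_in_subgroup:
  assumes "subgroup S G" "\<And>j. j < length is \<Longrightarrow> f (del_at j is) \<in> S"
  shows "cdiff G f is \<in> S"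
  unfolding cdiff_def using assms
  by (intro subgroup_finprod_closed) (auto intro: subgroup_int_pow_closed)

lemma cdiff_cdiff_eq_double_product:
  assumes "cochain G m g" "length is = Suc (Suc m)"
  shows "cdiff G (cdiff G g) is = finprod G (\<lambda>(j, k). g (del_at k (del_at j is)) [^] ((-1::int) ^ (j + k)))
    ({..<Suc (Suc m)} \<times> {..<Suc m})"
proof -
  have carrier: "g (del_at k (del_at j is)) \<in> carrier G" if "j < Suc (Suc m)" "k < Suc m" for j k
    using assms that by (simp add: cochain_def)
  have "cdiff G (cdiff G g) is = (\<Otimes>j\<in>{..<Suc (Suc m)}. \<Otimes>k\<in>{..<Suc m}.
      g (del_at k (del_at j is)) [^] ((-1::int) ^ (j + k)))"
    unfolding cdiff_def using assms(2) carrier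
    by (intro finprod_cong') (auto simp: finprod_int_pow int_pow_pow power_add mult.commute
        intro!: finprod_cong')
  also have "\<dots> = finprod G (\<lambda>(j, k). g (del_at k (del_at j is)) [^] ((-1::int) ^ (j + k)))
    ({..<Suc (Suc m)} \<times> {..<Suc m})"
  proof (rule finprod_cartesian_product[of _ _ "\<lambda>(j, k). g (del_at k (del_at j is)) [^] ((-1::int) ^ (j + k))",
        simplified])
    show "(\<lambda>(j, k). g (del_at k (del_at j is)) [^] ((-1::int) ^ (j + k)))
      \<in> {..<Suc (Suc m)} \<times> {..<Suc m} \<rightarrow> carrier G"
      using carrier by auto
  qed simp_all
  finally show ?thesis .
qed

text \<open>The terms of the double product cancel in pairs, because deleting the entries
  j > k in either order gives the same tuple but with opposite signs.\<close>

lemma cdiff_cdiff: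
  assumes g: "cochain G m g" and len: "length is = Suc (Suc m)"
  shows "cdiff G (cdiff G g) is = \<one>"
proof -
  define x where "x = (\<lambda>(j, k). g (del_at k (del_at j is)) [^] ((-1::int) ^ (j + k)))"
  define S where "S = {(j, k). j < Suc (Suc m) \<and> k < j}"
  define \<phi> :: "nat \<times> nat \<Rightarrow> nat \<times> nat" where "\<phi> = (\<lambda>(j, k). (k, j - 1))"
  have square: "{..<Suc (Suc m)} \<times> {..<Suc m} = S \<union> \<phi> ` S"
  proof (intro equalityI subsetI)
    fix p assume "p \<in> {..<Suc (Suc m)} \<times> {..<Suc m}"
    then obtain j k where p: "p = (j, k)" "j < Suc (Suc m)" "k < Suc m" by blast
    show "p \<in> S \<union> \<phi> ` S"
    proof (cases "k < j")
      case False
      then have "p = \<phi> (Suc k, j)" "(Suc k, j) \<in> S"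
        using p by (auto simp: \<phi>_def S_def)
      then show ?thesis by blast
    qed (use p in \<open>simp add: S_def\<close>)
  next
    fix p assume "p \<in> S \<union> \<phi> ` S"
    then show "p \<in> {..<Suc (Suc m)} \<times> {..<Suc m}"
      unfolding S_def \<phi>_def by auto
  qed
  have cancel: "x p \<otimes> x (\<phi> p) = \<one>" if "p \<in> S" for p
  proof -
    obtain j k where p: "p = (j, k)" "k < j" "j < Suc (Suc m)"
      using \<open>p \<in> S\<close> by (auto simp: S_def)
    have "(-1::int) ^ (k + (j - 1)) = - ((-1) ^ (j + k))"
      using p(2) by (cases j) (auto simp: add.commute)
    moreover have "del_at (j - 1) (del_at k is) = del_at k (del_at j is)"
      using del_at_del_at[of k j "is"] p len by simp
    moreover have "g (del_at k (del_at j is)) \<in> carrier G"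
      using g p len by (simp add: cochain_def)
    ultimately show ?thesis
      by (simp add: x_def \<phi>_def p int_pow_neg)
  qed
  have "finite S"
    by (rule finite_subset[of _ "{..<Suc (Suc m)} \<times> {..<Suc (Suc m)}"]) (auto simp: S_def)
  moreover have "inj_on \<phi> S" "S \<inter> \<phi> ` S = {}"
    by (auto simp: inj_on_def S_def \<phi>_def)
  moreover have "x \<in> S \<union> \<phi> ` S \<rightarrow> carrier G"
    unfolding square[symmetric] x_def using g len by (auto simp: cochain_def)
  ultimately have "finprod G x (S \<union> \<phi> ` S) = \<one>"
    using cancel by (rule finprod_cancel_pairs)
  then show ?thesis
    unfolding cdiff_cdiff_eq_double_product[OF assms] square x_def .
qed

end

lemma cdiff_hom:
  assumes "comm_group G" "comm_group H" "h \<in> hom G H" "cochain G m f" "length is = Suc m"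
  shows "h (cdiff G f is) = cdiff H (\<lambda>js. h (f js)) is"
proof -
  interpret G: comm_group G by fact
  interpret H: comm_group H by fact
  have carrier: "f (del_at j is) \<in> carrier G" if "j < length is" for j
    using assms that by (simp add: cochain_def)
  have "h (cdiff G f is) = (\<Otimes>\<^bsub>H\<^esub>j\<in>{..<length is}. h (f (del_at j is) [^]\<^bsub>G\<^esub> ((-1::int) ^ j)))"
    unfolding cdiff_def using assms carrier by (intro hom_finprod) auto
  also have "\<dots> = cdiff H (\<lambda>js. h (f js)) is"
    unfolding cdiff_def using assms carrier
    by (intro H.finprod_cong') (auto simp: hom_int_pow G.is_group H.is_group hom_in_carrier)
  finally show ?thesis .
qed

section \<open>Sums of subgroups\<close>

lemma subgroup_lattice_base: "A i \<in> subgroup_lattice G A"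
  unfolding subgroup_lattice_def by auto

lemma subgroup_lattice_generate:
  "U \<in> subgroup_lattice G A \<Longrightarrow> V \<in> subgroup_lattice G A \<Longrightarrow> generate G (U \<union> V) \<in> subgroup_lattice G A"
  unfolding subgroup_lattice_def by auto

lemma distributive_subgroup_latticeD:
  assumes "distributive_subgroup_lattice G A"
    and "U \<in> subgroup_lattice G A" "V \<in> subgroup_lattice G A" "W \<in> subgroup_lattice G A"
  shows "U \<inter> generate G (V \<union> W) = generate G ((U \<inter> V) \<union> (U \<inter> W))"
  using assms unfolding distributive_subgroup_lattice_def by blast

context group
begin

lemma sumsub_subgroup: "(\<And>i. subgroup (M i) G) \<Longrightarrow> subgroup (sumsub G (map M is)) G"
  unfolding sumsub_def by (intro generate_is_subgroup) (auto dest: subgroup.subset)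

lemma subset_sumsub: "i \<in> set is \<Longrightarrow> M i \<subseteq> sumsub G (map M is)"
  unfolding sumsub_def by (auto intro: generate.incl)

lemma sumsub_mono: "set js \<subseteq> set is \<Longrightarrow> sumsub G (map M js) \<subseteq> sumsub G (map M is)"
  unfolding sumsub_def by (intro mono_generate) auto

lemma sumsub_mono_family: "(\<And>i. M i \<subseteq> N i) \<Longrightarrow> sumsub G (map M is) \<subseteq> sumsub G (map N is)"
  unfolding sumsub_def by (intro mono_generate) auto

lemma generate_subgroup_eq: "subgroup H G \<Longrightarrow> generate G H = H"
  using generate_subgroup_incl[of H H] by (auto intro: generate.incl)

lemma generate_Un_generate:
  assumes "P \<subseteq> carrier G" "Q \<subseteq> carrier G"
  shows "generate G (P \<union> generate G Q) = generate G (P \<union> Q)"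
proof
  show "generate G (P \<union> Q) \<subseteq> generate G (P \<union> generate G Q)"
    by (intro mono_generate) (auto intro: generate.incl)
  have "generate G Q \<subseteq> generate G (P \<union> Q)"
    by (intro mono_generate) auto
  then show "generate G (P \<union> generate G Q) \<subseteq> generate G (P \<union> Q)"
    using assms by (intro generate_subgroup_incl generate_is_subgroup) (auto intro: generate.incl)
qed

lemma sumsub_single: "subgroup H G \<Longrightarrow> sumsub G [H] = H"
  by (simp add: sumsub_def generate_subgroup_eq)

lemma sumsub_Cons:
  "(\<And>i. subgroup (M i) G) \<Longrightarrow> sumsub G (map M (i # is)) = generate G (M i \<union> sumsub G (map M is))"
  unfolding sumsub_def by (subst generate_Un_generate) (auto dest: subgroup.subset)

lemma sumsub_in_subgroup_lattice:
  assumes "\<And>i. subgroup (A i) G" "is \<noteq> []"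
  shows "sumsub G (map A is) \<in> subgroup_lattice G A"
  using assms(2)
proof (induction "is" rule: list_nonempty_induct)
  case (single i)
  then show ?case
    using assms(1) by (simp add: sumsub_single subgroup_lattice_base)
next
  case (cons i "is")
  then show ?case
    unfolding sumsub_Cons[of A, OF assms(1)] by (intro subgroup_lattice_generate subgroup_lattice_base)
qed

lemma inter_sumsub_distrib:
  assumes "\<And>i. subgroup (A i) G" "distributive_subgroup_lattice G A" "is \<noteq> []"
  shows "A b \<inter> sumsub G (map A is) = sumsub G (map (\<lambda>i. A b \<inter> A i) is)"
  using assms(3)
proof (induction "is" rule: list_nonempty_induct)
  case (single i)
  then show ?case
    using assms(1) by (simp add: sumsub_single subgroups_Inter_pair)
next
  case (cons i "is")
  have "A b \<inter> sumsub G (map A (i # is)) = generate G ((A b \<inter> A i) \<union> (A b \<inter> sumsub G (map A is)))"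
    unfolding sumsub_Cons[of A, OF assms(1)]
    by (intro distributive_subgroup_latticeD[OF assms(2)] subgroup_lattice_base
        sumsub_in_subgroup_lattice[of A, OF assms(1) cons.hyps])
  then show ?case
    unfolding cons.IH sumsub_Cons[of "\<lambda>i. A b \<inter> A i", OF subgroups_Inter_pair[OF assms(1,1)]] .
qed

end

section \<open>Cocycles and coboundaries\<close>

locale subgroup_family = comm_group +
  fixes M :: "'i \<Rightarrow> 'a set"
  assumes subgroup_M: "\<And>i. subgroup (M i) G"
begin

lemma subgroup_sumsub: "subgroup (sumsub G (map M is)) G"
  using sumsub_subgroup[of M] subgroup_M by blast

lemma cocycle_mult:
  assumes f: "cocycle G M n f" and g: "cocycle G M n g"
  shows "cocycle G M n (\<lambda>is. f is \<otimes> g is)"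
proof -
  have "cdiff G (\<lambda>is. f is \<otimes> g is) is \<in> sumsub G (map M is)" if "length is = Suc (Suc n)" for "is"
    using f g that cdiff_mult[of "Suc n" f g "is"]
    by (simp add: cocycle_def subgroup.m_closed[OF subgroup_sumsub])
  with f g show ?thesis
    by (simp add: cocycle_def cochain_mult)
qed

lemma cocycle_inv:
  assumes f: "cocycle G M n f"
  shows "cocycle G M n (\<lambda>is. inv f is)"
proof -
  have "cdiff G (\<lambda>is. inv f is) is \<in> sumsub G (map M is)" if "length is = Suc (Suc n)" for "is"
    using f that cdiff_inv[of "Suc n" f "is"]
    by (simp add: cocycle_def subgroup.m_inv_closed[OF subgroup_sumsub])
  with f show ?thesis
    by (simp add: cocycle_def cochain_inv)
qed

lemma cocycle_cdiff: "cochain G n g \<Longrightarrow> cocycle G M n (cdiff G g)"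
  unfolding cocycle_def
  by (simp add: cochain_cdiff cdiff_cdiff subgroup.one_closed[OF subgroup_sumsub])

lemma cocycle_if_sumsub_valued:
  assumes "\<And>is. length is = Suc n \<Longrightarrow> a is \<in> sumsub G (map M is)"
  shows "cocycle G M n a"
  unfolding cocycle_def cochain_def
proof (intro conjI allI impI)
  show "a is \<in> carrier G" if "length is = Suc n" for "is"
    using assms[OF that] subgroup.subset[OF subgroup_sumsub] by blast
  fix "is" :: "'i list" assume len: "length is = Suc (Suc n)"
  show "cdiff G a is \<in> sumsub G (map M is)"
  proof (rule cdiff_in_subgroup[OF subgroup_sumsub])
    fix j assume "j < length is"
    then have "a (del_at j is) \<in> sumsub G (map M (del_at j is))"
      using assms len by simp
    also have "\<dots> \<subseteq> sumsub G (map M is)"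
      by (rule sumsub_mono[OF set_del_at_subset])
    finally show "a (del_at j is) \<in> sumsub G (map M is)" .
  qed
qed

lemma coboundary_mult:
  assumes "coboundary G M n f" "coboundary G M n f'"
  shows "coboundary G M n (\<lambda>is. f is \<otimes> f' is)"
proof -
  obtain g g' where g: "cochain G n g" "cochain G n g'"
    and cob: "\<And>is. length is = Suc n \<Longrightarrow> cdiff G g is \<otimes> inv f is \<in> sumsub G (map M is)"
             "\<And>is. length is = Suc n \<Longrightarrow> cdiff G g' is \<otimes> inv f' is \<in> sumsub G (map M is)"
    using assms unfolding coboundary_def by blast
  have f: "cochain G (Suc n) f" "cochain G (Suc n) f'"
    using assms by (simp_all add: coboundary_def)
  have "cdiff G (\<lambda>is. g is \<otimes> g' is) is \<otimes> inv (f is \<otimes> f' is)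
      = (cdiff G g is \<otimes> inv f is) \<otimes> (cdiff G g' is \<otimes> inv f' is)" if "length is = Suc n" for "is"
    using that g cochainD[OF f(1)] cochainD[OF f(2)]
      cochainD[OF cochain_cdiff[OF g(1)]] cochainD[OF cochain_cdiff[OF g(2)]]
    by (simp add: cdiff_mult inv_mult m_ac)
  then show ?thesis
    using assms g cob subgroup.m_closed[OF subgroup_sumsub]
    by (auto simp: coboundary_def cochain_mult intro!: exI[of _ "\<lambda>is. g is \<otimes> g' is"])
qed

lemma coboundary_cdiff:
  assumes "cochain G n g"
  shows "coboundary G M n (cdiff G g)"
proof -
  have "cdiff G g is \<otimes> inv cdiff G g is = \<one>" if "length is = Suc n" for "is"
    using cochainD[OF cochain_cdiff[OF assms] that] by simp
  then show ?thesis
    unfolding coboundary_def using assms cochain_cdiff[OF assms] subgroup.one_closed[OF subgroup_sumsub]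
    by auto
qed

lemma coboundary_if_sumsub_valued:
  assumes "\<And>is. length is = Suc n \<Longrightarrow> a is \<in> sumsub G (map M is)"
  shows "coboundary G M n a"
proof -
  have "cochain G (Suc n) a"
    using assms subgroup.subset[OF subgroup_sumsub] by (auto simp: cochain_def)
  then show ?thesis
    unfolding coboundary_def using assms
    by (auto simp: cdiff_def cochainD cochain_def subgroup.m_inv_closed[OF subgroup_sumsub]
        intro!: exI[of _ "\<lambda>_. \<one>"])
qed

end

context comm_group
begin

lemma coboundary_mono_family:
  "(\<And>i. M i \<subseteq> N i) \<Longrightarrow> coboundary G M n f \<Longrightarrow> coboundary G N n f"
  unfolding coboundary_def by (meson sumsub_mono_family subsetD)

lemma coboundary_cong:
  "coboundary G M n f \<Longrightarrow> (\<And>is. length is = Suc n \<Longrightarrow> f is = f' is) \<Longrightarrow> coboundary G M n f'"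
  unfolding coboundary_def cochain_def by simp

lemma cocycle_restrict:
  fixes A :: "'i \<Rightarrow> 'a set" and c :: "'i list \<Rightarrow> 'a"
  assumes "\<And>i. subgroup (A i) G" "distributive_subgroup_lattice G A"
    and "cocycle G A n c" "\<And>is. length is = Suc n \<Longrightarrow> c is \<in> A b"
  shows "cocycle G (\<lambda>i. A b \<inter> A i) n c"
  unfolding cocycle_def
proof (intro conjI allI impI)
  show "cochain G (Suc n) c"
    using assms(3) by (simp add: cocycle_def)
  fix "is" :: "'i list" assume len: "length is = Suc (Suc n)"
  have "cdiff G c is \<in> A b"
    using assms(1,4) len by (intro cdiff_in_subgroup) auto
  moreover have "cdiff G c is \<in> sumsub G (map A is)"
    using assms(3) len by (simp add: cocycle_def)
  ultimately show "cdiff G c is \<in> sumsub G (map (\<lambda>i. A b \<inter> A i) is)"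
    using inter_sumsub_distrib[OF assms(1,2), of "is" b] len by fastforce
qed

section \<open>Passing to the quotient by a subgroup\<close>

lemma cocycle_hom_image:
  assumes "comm_group H" "h \<in> hom G H" "\<And>i. subgroup (M i) G" "\<And>i. h ` M i \<subseteq> N i"
    and "cocycle G M n f"
  shows "cocycle H N n (\<lambda>is. h (f is))"
proof -
  interpret H: comm_group H by fact
  interpret group_hom G H h
    using assms by (simp add: group_hom_def group_hom_axioms_def is_group H.is_group)
  have image: "h ` sumsub G (map M is) \<subseteq> sumsub H (map N is)" for "is"
  proof -
    have "h ` sumsub G (map M is) = generate H (h ` \<Union> (M ` set is))"
      unfolding sumsub_def using assms(3) by (subst generate_img) (auto dest: subgroup.subset)
    also have "\<dots> \<subseteq> sumsub H (map N is)"
      unfolding sumsub_def using assms(4) by (intro H.mono_generate) auto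
    finally show ?thesis .
  qed
  have f: "cochain G (Suc n) f"
    using assms(5) by (simp add: cocycle_def)
  have "cdiff H (\<lambda>is. h (f is)) is \<in> sumsub H (map N is)" if len: "length is = Suc (Suc n)" for "is"
  proof -
    have "cdiff H (\<lambda>is. h (f is)) is = h (cdiff G f is)"
      using cdiff_hom[OF comm_group_axioms assms(1,2) f len] ..
    also have "\<dots> \<in> h ` sumsub G (map M is)"
      using assms(5) len by (simp add: cocycle_def)
    finally show ?thesis
      using image by blast
  qed
  then show ?thesis
    using f by (simp add: cocycle_def cochain_def)
qed

lemma cocycle_quotient:
  assumes "subgroup B G" "\<And>i. subgroup (A i) G" "cocycle G A n f"
  shows "cocycle (G Mod B) (\<lambda>i. (#>) B ` generate G (B \<union> A i)) n (\<lambda>is. B #> f is)"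
proof (rule cocycle_hom_image[OF abelian_FactGroup[OF assms(1)]
      normal.r_coset_hom_Mod[OF subgroup_imp_normal[OF assms(1)]] assms(2) _ assms(3)])
  show "(#>) B ` A i \<subseteq> (#>) B ` generate G (B \<union> A i)" for i
    by (intro image_mono) (auto intro: generate.incl)
qed

lemma subset_set_mult_left:
  assumes "subgroup K G" "H \<subseteq> carrier G"
  shows "H \<subseteq> H <#> K"
proof
  fix x assume "x \<in> H"
  then have "x = x \<otimes> \<one>"
    using assms(2) by auto
  then show "x \<in> H <#> K"
    unfolding set_mult_def using \<open>x \<in> H\<close> subgroup.one_closed[OF assms(1)] by blast
qed

lemma subset_set_mult_right:
  assumes "subgroup H G" "K \<subseteq> carrier G"
  shows "K \<subseteq> H <#> K"
proof
  fix x assume "x \<in> K"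
  then have "x = \<one> \<otimes> x"
    using assms(2) by auto
  then show "x \<in> H <#> K"
    unfolding set_mult_def using \<open>x \<in> K\<close> subgroup.one_closed[OF assms(1)] by blast
qed

lemma sumsub_quotient_subset:
  assumes "subgroup B G" "\<And>i. subgroup (A i) G"
  shows "sumsub (G Mod B) (map (\<lambda>i. (#>) B ` generate G (B \<union> A i)) is)
    \<subseteq> (#>) B ` (B <#> sumsub G (map A is))"
proof -
  interpret Q: comm_group "G Mod B"
    using abelian_FactGroup[OF assms(1)] .
  interpret group_hom G "G Mod B" "(#>) B"
    using subgroup_imp_normal[OF assms(1)]
    by (simp add: group_hom_def group_hom_axioms_def is_group Q.is_group normal.r_coset_hom_Mod)
  define T where "T = B <#> sumsub G (map A is)"
  have S: "subgroup (sumsub G (map A is)) G"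
    using assms(2) by (rule sumsub_subgroup)
  have T: "subgroup T G"
    unfolding T_def using assms(1) S by (rule mult_subgroups)
  have "generate G (B \<union> A i) \<subseteq> T" if "i \<in> set is" for i
    using subset_set_mult_left[OF S subgroup.subset[OF assms(1)]]
      subset_set_mult_right[OF assms(1) subgroup.subset[OF S]] subset_sumsub[OF that] T
    unfolding T_def by (intro generate_subgroup_incl) auto
  then show ?thesis
    unfolding T_def[symmetric] unfolding sumsub_def using T
    by (intro Q.generate_subgroup_incl subgroup_img_is_subgroup) auto
qed

lemma mem_of_rcos_image:
  assumes "subgroup B G" "subgroup T G" "B \<subseteq> T" "y \<in> carrier G" "B #> y \<in> (#>) B ` T"
  shows "y \<in> T"
proof -
  obtain t where t: "t \<in> T" "B #> y = B #> t"
    using assms(5) by blast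
  then have "y \<in> B #> t"
    using rcos_self[OF assms(4,1)] by simp
  then obtain c where "c \<in> B" "y = c \<otimes> t"
    unfolding r_coset_def by blast
  then show ?thesis
    using t(1) assms(3) subgroup.m_closed[OF assms(2)] by blast
qed

lemma mem_set_mult_sumsub_of_quotient:
  assumes "subgroup B G" "\<And>i. subgroup (A i) G" "y \<in> carrier G"
    and "B #> y \<in> sumsub (G Mod B) (map (\<lambda>i. (#>) B ` generate G (B \<union> A i)) is)"
  shows "y \<in> B <#> sumsub G (map A is)"
proof -
  have S: "subgroup (sumsub G (map A is)) G"
    using assms(2) by (rule sumsub_subgroup)
  show ?thesis
  proof (rule mem_of_rcos_image[OF assms(1) mult_subgroups[OF assms(1) S] _ assms(3)])
    show "B \<subseteq> B <#> sumsub G (map A is)"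
      using S subgroup.subset[OF assms(1)] by (rule subset_set_mult_left)
    show "B #> y \<in> (#>) B ` (B <#> sumsub G (map A is))"
      using assms(4) sumsub_quotient_subset[where A=A, OF assms(1,2)] by blast
  qed
qed

lemma coboundary_quotient_lift:
  assumes "subgroup B G" "\<And>i. subgroup (A i) G" "cochain G (Suc n) f"
    and "coboundary (G Mod B) (\<lambda>i. (#>) B ` generate G (B \<union> A i)) n (\<lambda>is. B #> f is)"
  shows "\<exists>g. cochain G n g \<and>
    (\<forall>is. length is = Suc n \<longrightarrow> f is \<otimes> inv (cdiff G g is) \<in> B <#> sumsub G (map A is))"
proof -
  define Q where "Q = G Mod B"
  define QA where "QA i = (#>) B ` generate G (B \<union> A i)" for i
  interpret Q: comm_group Q
    unfolding Q_def using abelian_FactGroup[OF assms(1)] .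
  have hom: "(#>) B \<in> hom G Q"
    unfolding Q_def using normal.r_coset_hom_Mod[OF subgroup_imp_normal[OF assms(1)]] .
  interpret quotient_map: group_hom G Q "(#>) B"
    using hom by (simp add: group_hom_def group_hom_axioms_def is_group Q.is_group)
  obtain g' where g': "cochain Q n g'" and cob:
    "\<And>is. length is = Suc n \<Longrightarrow> cdiff Q g' is \<otimes>\<^bsub>Q\<^esub> inv\<^bsub>Q\<^esub> (B #> f is) \<in> sumsub Q (map QA is)"
    using assms(4) unfolding coboundary_def Q_def QA_def by blast
  have "\<forall>is. \<exists>x. length is = n \<longrightarrow> x \<in> carrier G \<and> g' is = B #> x"
    using g' by (auto simp: cochain_def Q_def carrier_FactGroup)
  then obtain g where g: "\<And>is. length is = n \<Longrightarrow> g is \<in> carrier G \<and> g' is = B #> g is"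
    by metis
  then have "cochain G n g"
    by (simp add: cochain_def)
  moreover have "f is \<otimes> inv (cdiff G g is) \<in> B <#> sumsub G (map A is)" if len: "length is = Suc n" for "is"
  proof -
    have carrier: "cdiff G g is \<in> carrier G" "f is \<in> carrier G"
      using cochainD[OF cochain_cdiff[OF \<open>cochain G n g\<close>]] cochainD[OF assms(3)] len by auto
    have "B #> (cdiff G g is \<otimes> inv f is) = cdiff Q (\<lambda>js. B #> g js) is \<otimes>\<^bsub>Q\<^esub> inv\<^bsub>Q\<^esub> (B #> f is)"
      using hom \<open>cochain G n g\<close> len carrier comm_group_axioms Q.comm_group_axioms
      by (simp add: cdiff_hom)
    also have "cdiff Q (\<lambda>js. B #> g js) is = cdiff Q g' is"
      using g g' len by (intro Q.cdiff_cong[of n]) auto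
    finally have "cdiff G g is \<otimes> inv f is \<in> B <#> sumsub G (map A is)"
      using cob[OF len] carrier unfolding Q_def QA_def
      by (intro mem_set_mult_sumsub_of_quotient[OF assms(1,2)]) auto
    then have "inv (cdiff G g is \<otimes> inv f is) \<in> B <#> sumsub G (map A is)"
      using mult_subgroups[OF assms(1) sumsub_subgroup[OF assms(2)]] by (rule subgroup.m_inv_closed[rotated])
    then show ?thesis
      using carrier by (simp add: inv_mult m_comm)
  qed
  ultimately show ?thesis by blast
qed

lemma set_mult_valued_split:
  assumes "\<And>is. length is = m \<Longrightarrow> h is \<in> B <#> S is" "B \<subseteq> carrier G" "\<And>is. S is \<subseteq> carrier G"
  shows "\<exists>a. \<forall>is. length is = m \<longrightarrow> a is \<in> S is \<and> h is \<otimes> inv (a is) \<in> B"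
proof -
  have "\<exists>a. length is = m \<longrightarrow> a \<in> S is \<and> h is \<otimes> inv a \<in> B" for "is"
  proof (cases "length is = m")
    case True
    then obtain c a where "c \<in> B" "a \<in> S is" "h is = c \<otimes> a"
      using assms(1) unfolding set_mult_def by blast
    moreover have "c \<in> carrier G" "a \<in> carrier G"
      using \<open>c \<in> B\<close> \<open>a \<in> S is\<close> assms(2,3) by auto
    then have "c \<otimes> a \<otimes> inv a = c"
      by (simp add: m_assoc)
    ultimately show ?thesis by metis
  qed simp
  then show ?thesis by metis
qed

lemma cocycle_split_by_quotient:
  fixes A :: "'i \<Rightarrow> 'a set"
  assumes "subgroup B G" "\<And>i. subgroup (A i) G"
    and "cohom_vanishes (G Mod B) (\<lambda>i. (#>) B ` generate G (B \<union> A i)) n"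
    and "cocycle G A n f"
  shows "\<exists>g a. cochain G n g \<and> (\<forall>is. length is = Suc n \<longrightarrow>
    a is \<in> sumsub G (map A is) \<and> f is \<otimes> inv (cdiff G g is) \<otimes> inv (a is) \<in> B)"
proof -
  have f: "cochain G (Suc n) f"
    using assms(4) by (simp add: cocycle_def)
  have "coboundary (G Mod B) (\<lambda>i. (#>) B ` generate G (B \<union> A i)) n (\<lambda>is. B #> f is)"
    using assms(3) cocycle_quotient[OF assms(1,2,4)] by (simp add: cohom_vanishes_iff)
  then obtain g where g: "cochain G n g"
    and g_lift: "\<And>is. length is = Suc n \<Longrightarrow> f is \<otimes> inv (cdiff G g is) \<in> B <#> sumsub G (map A is)"
    using coboundary_quotient_lift[where A=A, OF assms(1,2) f] by blast
  moreover obtain a where "\<And>is. length is = Suc n \<Longrightarrow>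
      a is \<in> sumsub G (map A is) \<and> f is \<otimes> inv (cdiff G g is) \<otimes> inv (a is) \<in> B"
    using set_mult_valued_split[of "Suc n" "\<lambda>is. f is \<otimes> inv (cdiff G g is)" B
        "\<lambda>is. sumsub G (map A is)"] g_lift
      subgroup.subset[OF assms(1)] subgroup.subset[OF sumsub_subgroup[where M=A, OF assms(2)]]
    by blast
  ultimately show ?thesis by blast
qed

lemma coboundary_from_sub_and_quotient:
  fixes A :: "'i \<Rightarrow> 'a set"
  assumes "\<And>i. subgroup (A i) G" "distributive_subgroup_lattice G A"
    and "cohom_vanishes G (\<lambda>i. A b \<inter> A i) n"
    and "cohom_vanishes (G Mod A b) (\<lambda>i. (#>) (A b) ` generate G (A b \<union> A i)) n"
    and f: "cocycle G A n f"
  shows "coboundary G A n f"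
proof -
  interpret A: subgroup_family G A
    using assms(1) by (simp add: subgroup_family_def subgroup_family_axioms_def comm_group_axioms)
  have "cochain G (Suc n) f"
    using f by (simp add: cocycle_def)
  obtain g a where g: "cochain G n g" and a: "\<And>is. length is = Suc n \<Longrightarrow>
      a is \<in> sumsub G (map A is) \<and> f is \<otimes> inv (cdiff G g is) \<otimes> inv (a is) \<in> A b"
    using cocycle_split_by_quotient[where A=A, OF assms(1)[of b] assms(1,4) f] by blast
  have dg: "cocycle G A n (cdiff G g)" "coboundary G A n (cdiff G g)"
    using A.cocycle_cdiff[OF g] A.coboundary_cdiff[OF g] .
  have "cocycle G A n a" "coboundary G A n a"
    using A.cocycle_if_sumsub_valued A.coboundary_if_sumsub_valued a
    by blast+
  define c where "c is = f is \<otimes> inv (cdiff G g is) \<otimes> inv (a is)" for "is"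
  have "cocycle G A n c"
    unfolding c_def
    by (intro A.cocycle_mult A.cocycle_inv f dg(1) \<open>cocycle G A n a\<close>)
  then have "cocycle G (\<lambda>i. A b \<inter> A i) n c"
    by (rule cocycle_restrict[OF assms(1,2)]) (use a in \<open>simp add: c_def\<close>)
  then have "coboundary G (\<lambda>i. A b \<inter> A i) n c"
    using assms(3) by (simp add: cohom_vanishes_iff)
  then have "coboundary G A n c"
    by (rule coboundary_mono_family[rotated]) blast
  then have "coboundary G A n (\<lambda>is. cdiff G g is \<otimes> c is \<otimes> a is)"
    by (intro A.coboundary_mult dg(2) \<open>coboundary G A n a\<close>)
  then show "coboundary G A n f"
  proof (rule coboundary_cong)
    fix "is" :: "'i list" assume "length is = Suc n"
    then have "f is \<in> carrier G" "cdiff G g is \<in> carrier G" "a is \<in> carrier G"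
      using cochainD[OF \<open>cochain G (Suc n) f\<close>] cochainD[OF cochain_cdiff[OF g]] a
        subgroup.subset[OF A.subgroup_sumsub]
      by blast+
    then show "cdiff G g is \<otimes> c is \<otimes> a is = f is"
      by (simp add: c_def m_assoc m_lcomm[of "cdiff G g is" "f is"])
  qed
qed

end

theorem mainTheorem11:
  fixes G :: "('a,'b) monoid_scheme" and A :: "'i \<Rightarrow> 'a set" and b :: 'i and n :: nat
  assumes "comm_group G"
    and "\<And>i. subgroup (A i) G"
    and "distributive_subgroup_lattice G A"
    and "n > 0"
    and "cohom_vanishes G (\<lambda>i. A b \<inter> A i) n"
    and "cohom_vanishes (G Mod (A b))
           (\<lambda>i. (\<lambda>a. A b #>\<^bsub>G\<^esub> a) ` generate G (A b \<union> A i)) n"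
  shows "cohom_vanishes G A n"
  using comm_group.coboundary_from_sub_and_quotient[OF assms(1,2,3,5,6)]
  by (simp add: cohom_vanishes_iff)

end
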